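(* Let $d,n\ge 1$, let $\boldsymbol{a}_1,\ldots,\boldsymbol{a}_n\in\mathbf{R}^d$, let $w_1,\ldots,w_n>0$, fix $\varepsilon>0$ and $1\le p\le 2$. Define $\Phi(\boldsymbol{x})=\sum_{j=1}^n w_j\,(\lVert\boldsymbol{x}-\boldsymbol{a}_j\rVert^2+\varepsilon)^{p/2}$. Let $\boldsymbol{x}^{(0)}\in\mathbf{R}^d$ be arbitrary and define, for $t\ge 0$, $$\mu_j^{(t)}=w_j\,(\lVert\boldsymbol{x}^{(t)}-\boldsymbol{a}_j\rVert^2+\varepsilon)^{p/2-1},\qquad \boldsymbol{x}^{(t+1)}=\frac{\sum_j\mu_j^{(t)}\boldsymbol{a}_j}{\sum_j\mu_j^{(t)}}.$$ Then $\Phi$ has a unique stationary point $\boldsymbol{x}^\star$, every convergent subsequence of $(\boldsymbol{x}^{(t)})$ has limit $\boldsymbol{x}^\star$, and the whole sequence $(\boldsymbol{x}^{(t)})$ converges to $\boldsymbol{x}^\star$.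
   Context: $\lVert\cdot\rVert$ is the Euclidean norm on $\mathbf{R}^d$. A stationary point of $\Phi$ is a point where its gradient vanishes. *)

theory Defs
  imports "HOL-Analysis.Analysis"
begin

definition stationary_point :: "('a::euclidean_space \<Rightarrow> real) \<Rightarrow> 'a \<Rightarrow> bool" where
  "stationary_point f x \<longleftrightarrow> (f has_derivative (\<lambda>h. 0)) (at x)"

definition Phi :: "nat \<Rightarrow> (nat \<Rightarrow> 'a::euclidean_space) \<Rightarrow> (nat \<Rightarrow> real) \<Rightarrow> real \<Rightarrow> real \<Rightarrow> 'a \<Rightarrow> real" where
  "Phi n a w eps p x = (\<Sum>j<n. w j * (norm (x - a j) ^ 2 + eps) powr (p / 2))"

definition mu :: "(nat \<Rightarrow> 'a::euclidean_space) \<Rightarrow> (nat \<Rightarrow> real) \<Rightarrow> real \<Rightarrow> real \<Rightarrow> 'a \<Rightarrow> nat \<Rightarrow> real" where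
  "mu a w eps p x j = w j * (norm (x - a j) ^ 2 + eps) powr (p / 2 - 1)"

end

theory Submission
  imports Defs
begin

text \<open>The gradient of Phi at y is p times the sum of mu_j(y) (y - a_j). For p \<ge> 1 the map
  u \<mapsto> (|u|^2 + eps)^(p/2 - 1) u is strictly monotone, hence so is the gradient, and Phi has at most
  one stationary point. The iteration is majorize-minimize: since s \<mapsto> s^(p/2) is concave for
  p \<le> 2, Phi lies below the quadratic z \<mapsto> Phi(y) + p/2 sum_j mu_j(y) (|z - a_j|^2 - |y - a_j|^2),
  which touches Phi at y and is minimised at the next iterate. The iterates are convex combinations
  of the a_j, so they stay bounded, the weights stay bounded below, and the guaranteed decrease of
  Phi forces the steps to tend to 0. Every cluster point is then a fixed point of the continuous
  iteration map, i.e. a stationary point, and a bounded sequence with a single cluster point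
  converges.\<close>

lemma powr_le_tangent:
  fixes A B c :: real
  assumes "0 < A" "0 < B" "0 \<le> c" "c \<le> 1"
  shows "A powr c \<le> B powr c + c * B powr (c - 1) * (A - B)"
proof -
  have "A powr c = A powr c * B powr (1 - c) * B powr (c - 1)"
    using assms by (simp add: mult.assoc powr_add[symmetric])
  also have "\<dots> \<le> (c * A + (1 - c) * B) * B powr (c - 1)"
    using Youngs_inequality_0[of c "1 - c" A B] assms by (intro mult_right_mono) auto
  also have "\<dots> = B powr c + c * B powr (c - 1) * (A - B)"
    using assms powr_add[of B 1 "c - 1"] by (simp add: algebra_simps)
  finally show ?thesis .
qed

lemma mult_powr_strict_mono:
  fixes e p s t :: real
  assumes "0 < e" "1 \<le> p" "0 \<le> s" "s < t"
  shows "s * (s + e) powr (p - 2) < t * (t + e) powr (p - 2)"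
proof -
  have split: "z * (z + e) powr (p - 2) = z / (z + e) * (z + e) powr (p - 1)" if "0 \<le> z" for z
    using that assms powr_add[of "z + e" "p - 2" 1] by (simp add: field_simps)
  have "s / (s + e) * (s + e) powr (p - 1) < t / (t + e) * (s + e) powr (p - 1)"
    using assms by (intro mult_strict_right_mono) (simp_all add: field_simps)
  also have "\<dots> \<le> t / (t + e) * (t + e) powr (p - 1)"
    using assms by (intro mult_left_mono powr_mono2) auto
  finally show ?thesis using split assms by simp
qed

lemma smoothed_power_radial_strict_mono:
  fixes e p s t :: real
  assumes "0 < e" "1 \<le> p" "0 \<le> s" "s < t"
  shows "(s\<^sup>2 + e) powr (p/2 - 1) * s < (t\<^sup>2 + e) powr (p/2 - 1) * t"
proof -
  have square: "((z\<^sup>2 + e) powr (p/2 - 1) * z)\<^sup>2 = z\<^sup>2 * (z\<^sup>2 + e) powr (p - 2)" for z :: real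
    by (simp add: power_mult_distrib power2_eq_square powr_add[symmetric])
  have "((s\<^sup>2 + e) powr (p/2 - 1) * s)\<^sup>2 < ((t\<^sup>2 + e) powr (p/2 - 1) * t)\<^sup>2"
    unfolding square using assms by (intro mult_powr_strict_mono power_strict_mono) auto
  then show ?thesis
    by (rule power_less_imp_less_base) (use assms in simp)
qed

lemma smoothed_power_grad_strictly_monotone:
  fixes u v :: "'a::real_inner"
  assumes "0 < e" "1 \<le> p" "u \<noteq> v"
  shows "0 < inner (((norm u)\<^sup>2 + e) powr (p/2 - 1) *\<^sub>R u - ((norm v)\<^sup>2 + e) powr (p/2 - 1) *\<^sub>R v) (u - v)"
proof -
  define s where "s = ((norm u)\<^sup>2 + e) powr (p/2 - 1)"
  define t where "t = ((norm v)\<^sup>2 + e) powr (p/2 - 1)"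
  have "0 < (norm z)\<^sup>2 + e" for z :: 'a
    using \<open>0 < e\<close> by (simp add: add_nonneg_pos)
  from this[of u] this[of v] have "0 < s" "0 < t"
    by (simp_all add: s_def t_def)
  show ?thesis
  proof (cases "norm u = norm v")
    case True
    then have "inner (s *\<^sub>R u - t *\<^sub>R v) (u - v) = s * (norm (u - v))\<^sup>2"
      by (simp add: s_def t_def power2_norm_eq_inner algebra_simps)
    then show ?thesis
      using \<open>0 < s\<close> assms(3) by (simp add: s_def t_def)
  next
    case False
    \<comment> \<open>Cauchy-Schwarz reduces the claim to the strict monotonicity of the radial profile.\<close>
    have "(norm u - norm v) * (s * norm u - t * norm v)
        = s * (norm u)\<^sup>2 + t * (norm v)\<^sup>2 - (s + t) * (norm u * norm v)"
      by (simp add: power2_eq_square algebra_simps)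
    also have "\<dots> \<le> s * (norm u)\<^sup>2 + t * (norm v)\<^sup>2 - (s + t) * inner u v"
      using norm_cauchy_schwarz[of u v] \<open>0 < s\<close> \<open>0 < t\<close> by (intro diff_left_mono mult_left_mono) auto
    also have "\<dots> = inner (s *\<^sub>R u - t *\<^sub>R v) (u - v)"
      by (simp add: power2_norm_eq_inner inner_commute algebra_simps)
    finally have le: "(norm u - norm v) * (s * norm u - t * norm v) \<le> inner (s *\<^sub>R u - t *\<^sub>R v) (u - v)" .
    have "0 < (norm u - norm v) * (s * norm u - t * norm v)"
      using False smoothed_power_radial_strict_mono[OF assms(1,2), of "norm u" "norm v"]
        smoothed_power_radial_strict_mono[OF assms(1,2), of "norm v" "norm u"]
      by (cases "norm u < norm v") (auto simp: s_def t_def mult_neg_neg mult.commute)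
    with le show ?thesis by (simp add: s_def t_def)
  qed
qed

lemma sufficient_decrease_imp_steps_tendsto_zero:
  fixes x :: "nat \<Rightarrow> 'a::real_normed_vector" and f :: "'a \<Rightarrow> real"
  assumes "0 < c" and "\<And>t. b \<le> f (x t)"
    and decrease: "\<And>t. f (x (Suc t)) + c * (norm (x (Suc t) - x t))\<^sup>2 \<le> f (x t)"
  shows "(\<lambda>t. x (Suc t) - x t) \<longlonglongrightarrow> 0"
proof -
  have step_le: "c * (norm (x (Suc t) - x t))\<^sup>2 \<le> f (x t) - f (x (Suc t))" for t
    using decrease[of t] by linarith
  have "0 \<le> c * (norm (x (Suc t) - x t))\<^sup>2" for t
    using \<open>0 < c\<close> by simp
  then have "decseq (\<lambda>t. f (x t))"
    using step_le by (intro decseq_SucI) (meson diff_ge_0_iff_ge order_trans)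
  then obtain L where L: "(\<lambda>t. f (x t)) \<longlonglongrightarrow> L"
    using assms(2) decseq_convergent by metis
  have "(\<lambda>t. f (x t) - f (x (Suc t))) \<longlonglongrightarrow> L - L"
    by (intro tendsto_diff L LIMSEQ_Suc[OF L])
  then have decrease_lim: "(\<lambda>t. (f (x t) - f (x (Suc t))) / c) \<longlonglongrightarrow> 0"
    using tendsto_divide_zero by fastforce
  have le: "\<forall>t. (norm (x (Suc t) - x t))\<^sup>2 \<le> (f (x t) - f (x (Suc t))) / c"
    using step_le \<open>0 < c\<close> by (simp add: pos_le_divide_eq mult.commute)
  have "(\<lambda>t. (norm (x (Suc t) - x t))\<^sup>2) \<longlonglongrightarrow> 0"
    by (rule tendsto_sandwich[OF always_eventually always_eventually tendsto_const decrease_lim])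
      (use le in simp_all)
  then have "(\<lambda>t. sqrt ((norm (x (Suc t) - x t))\<^sup>2)) \<longlonglongrightarrow> sqrt 0"
    by (rule tendsto_real_sqrt)
  then show ?thesis
    by (simp add: tendsto_norm_zero_iff)
qed

lemma cluster_point_of_orbit_is_fixed_point:
  fixes T :: "'a::real_normed_vector \<Rightarrow> 'a"
  assumes orbit: "\<And>t. x (Suc t) = T (x t)" and "isCont T l"
    and steps: "(\<lambda>t. x (Suc t) - x t) \<longlonglongrightarrow> 0"
    and "strict_mono r" and lim: "(x \<circ> r) \<longlonglongrightarrow> l"
  shows "T l = l"
proof -
  have "(\<lambda>k. T (x (r k))) \<longlonglongrightarrow> T l"
    using isCont_tendsto_compose[OF \<open>isCont T l\<close>] lim by (simp add: comp_def)
  moreover have "(\<lambda>k. (x (Suc (r k)) - x (r k)) + x (r k)) \<longlonglongrightarrow> 0 + l"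
    using LIMSEQ_subseq_LIMSEQ[OF steps \<open>strict_mono r\<close>] lim
    by (intro tendsto_add) (auto simp: comp_def)
  ultimately show ?thesis
    using LIMSEQ_unique by (fastforce simp: orbit)
qed

lemma bounded_unique_cluster_point_imp_tendsto:
  fixes x :: "nat \<Rightarrow> 'a::heine_borel"
  assumes "bounded (range x)"
    and cluster: "\<And>r l. strict_mono r \<Longrightarrow> (x \<circ> r) \<longlonglongrightarrow> l \<Longrightarrow> l = L"
  shows "x \<longlonglongrightarrow> L"
proof (rule ccontr)
  assume "\<not> x \<longlonglongrightarrow> L"
  then obtain e where "0 < e" and "\<not> eventually (\<lambda>t. dist (x t) L < e) sequentially"
    unfolding tendsto_iff by blast
  then obtain r :: "nat \<Rightarrow> nat" where r: "strict_mono r" and far: "\<And>k. \<not> dist (x (r k)) L < e"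
    using not_eventually_sequentiallyD by metis
  have "bounded (range (x \<circ> r))"
    using assms(1) by (rule bounded_subset) auto
  then obtain l s where s: "strict_mono s" and lim: "(x \<circ> r \<circ> s) \<longlonglongrightarrow> l"
    using bounded_imp_convergent_subsequence by blast
  have "l = L"
    using cluster[of "r \<circ> s" l] strict_mono_o[OF r s] lim by (simp add: comp_assoc)
  then have "eventually (\<lambda>k. dist (x (r (s k))) L < e) sequentially"
    using lim \<open>0 < e\<close> unfolding tendsto_iff by (simp add: comp_def)
  with far show False
    by (auto dest: eventually_happens)
qed

lemma has_derivative_norm_sq_powr:
  fixes b y :: "'a::real_inner"
  assumes "0 < e"
  shows "((\<lambda>x. ((norm (x - b))\<^sup>2 + e) powr c) has_derivative
           (\<lambda>h. 2 * c * ((norm (y - b))\<^sup>2 + e) powr (c - 1) * inner (y - b) h)) (at y)"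
proof -
  have pos: "0 < (norm (y - b))\<^sup>2 + e"
    using assms by (simp add: add_nonneg_pos)
  have base: "((\<lambda>x. (norm (x - b))\<^sup>2 + e) has_derivative (\<lambda>h. 2 * inner (y - b) h)) (at y)"
    unfolding power2_norm_eq_inner
    by (auto intro!: derivative_eq_intros simp: inner_commute algebra_simps)
  have "((\<lambda>x. ((norm (x - b))\<^sup>2 + e) powr c) has_derivative (\<lambda>h. ((norm (y - b))\<^sup>2 + e) powr c
      * (0 * ln ((norm (y - b))\<^sup>2 + e) + 2 * inner (y - b) h * c / ((norm (y - b))\<^sup>2 + e)))) (at y)"
    by (rule has_derivative_powr[OF base has_derivative_const pos]) simp
  moreover have "((norm (y - b))\<^sup>2 + e) powr c
      * (0 * ln ((norm (y - b))\<^sup>2 + e) + 2 * inner (y - b) h * c / ((norm (y - b))\<^sup>2 + e))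
      = 2 * c * ((norm (y - b))\<^sup>2 + e) powr (c - 1) * inner (y - b) h" for h
    using pos by (simp add: powr_diff)
  ultimately show ?thesis
    by simp
qed

locale irls =
  fixes n :: nat and a :: "nat \<Rightarrow> 'a::euclidean_space" and w :: "nat \<Rightarrow> real" and eps p :: real
  assumes n_pos: "1 \<le> n" and w_pos: "\<And>j. j < n \<Longrightarrow> 0 < w j" and eps_pos: "0 < eps"
begin

definition weight_sum :: "'a \<Rightarrow> real" where
  "weight_sum y = (\<Sum>j<n. mu a w eps p y j)"

definition step :: "'a \<Rightarrow> 'a" where
  "step y = (1 / weight_sum y) *\<^sub>R (\<Sum>j<n. mu a w eps p y j *\<^sub>R a j)"

definition scaled_grad :: "'a \<Rightarrow> 'a" where
  "scaled_grad y = (\<Sum>j<n. mu a w eps p y j *\<^sub>R (y - a j))"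

lemma norm_sq_add_eps_pos: "0 < (norm z)\<^sup>2 + eps"
  using eps_pos by (simp add: add_nonneg_pos)

lemma mu_pos: "j < n \<Longrightarrow> 0 < mu a w eps p y j"
  using w_pos[of j] norm_sq_add_eps_pos[of "y - a j"] by (simp add: mu_def)

lemma weight_sum_pos: "0 < weight_sum y"
  unfolding weight_sum_def using n_pos mu_pos by (intro sum_pos) (auto simp: lessThan_empty_iff)

lemma scaled_grad_eq: "scaled_grad y = weight_sum y *\<^sub>R (y - step y)"
  using weight_sum_pos[of y]
  by (simp add: scaled_grad_def step_def weight_sum_def scaleR_diff_right sum_subtractf scaleR_sum_left)

lemma step_eq_iff: "step y = y \<longleftrightarrow> scaled_grad y = 0"
  using weight_sum_pos[of y] by (auto simp: scaled_grad_eq)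

lemma has_derivative_Phi:
  "(Phi n a w eps p has_derivative (\<lambda>h. p * inner (scaled_grad y) h)) (at y)"
proof -
  have "((\<lambda>x. \<Sum>j<n. w j * ((norm (x - a j))\<^sup>2 + eps) powr (p / 2)) has_derivative
     (\<lambda>h. \<Sum>j<n. w j * (2 * (p/2) * ((norm (y - a j))\<^sup>2 + eps) powr (p/2 - 1) * inner (y - a j) h))) (at y)"
    by (intro has_derivative_sum has_derivative_mult_right has_derivative_norm_sq_powr eps_pos)
  then show ?thesis
    unfolding Phi_def[abs_def]
    by (simp add: scaled_grad_def mu_def inner_sum_left sum_distrib_left algebra_simps)
qed

lemma stationary_point_iff:
  assumes "0 < p"
  shows "stationary_point (Phi n a w eps p) y \<longleftrightarrow> scaled_grad y = 0"
proof
  assume "stationary_point (Phi n a w eps p) y"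
  then have "(\<lambda>h. p * inner (scaled_grad y) h) = (\<lambda>h. 0)"
    unfolding stationary_point_def using has_derivative_unique has_derivative_Phi by blast
  then have "p * inner (scaled_grad y) (scaled_grad y) = 0"
    by metis
  with assms show "scaled_grad y = 0"
    by simp
next
  assume "scaled_grad y = 0"
  then show "stationary_point (Phi n a w eps p) y"
    using has_derivative_Phi[of y] unfolding stationary_point_def by simp
qed

lemma scaled_grad_zero_unique:
  assumes "1 \<le> p" and "scaled_grad y = 0" and "scaled_grad z = 0"
  shows "y = z"
proof (rule ccontr)
  assume "y \<noteq> z"
  define g where "g u = ((norm u)\<^sup>2 + eps) powr (p/2 - 1) *\<^sub>R u" for u :: 'a
  have "inner (scaled_grad y - scaled_grad z) (y - z)
      = (\<Sum>j<n. w j * inner (g (y - a j) - g (z - a j)) ((y - a j) - (z - a j)))"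
    by (simp add: scaled_grad_def mu_def g_def inner_sum_left sum_subtractf[symmetric] algebra_simps)
  also have "\<dots> > 0"
  proof (intro sum_pos)
    fix j assume "j \<in> {..<n}"
    then show "0 < w j * inner (g (y - a j) - g (z - a j)) ((y - a j) - (z - a j))"
      using w_pos[of j] \<open>y \<noteq> z\<close> unfolding g_def
      by (intro mult_pos_pos smoothed_power_grad_strictly_monotone[OF eps_pos \<open>1 \<le> p\<close>]) auto
  qed (use n_pos in \<open>auto simp: lessThan_empty_iff\<close>)
  finally show False
    using assms by simp
qed

lemma weighted_sq_dist_change:
  "(\<Sum>j<n. mu a w eps p y j * ((norm (z - a j))\<^sup>2 - (norm (y - a j))\<^sup>2))
    = weight_sum y * ((norm (z - step y))\<^sup>2 - (norm (y - step y))\<^sup>2)"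
proof -
  have "(norm (z - a j))\<^sup>2 - (norm (y - a j))\<^sup>2 = (norm (z - y))\<^sup>2 + 2 * inner (z - y) (y - a j)" for j
    by (simp add: power2_norm_eq_inner inner_commute algebra_simps)
  then have "(\<Sum>j<n. mu a w eps p y j * ((norm (z - a j))\<^sup>2 - (norm (y - a j))\<^sup>2))
      = (\<Sum>j<n. mu a w eps p y j * (norm (z - y))\<^sup>2 + 2 * inner (z - y) (mu a w eps p y j *\<^sub>R (y - a j)))"
    by (intro sum.cong refl) (simp add: distrib_left)
  also have "\<dots> = weight_sum y * (norm (z - y))\<^sup>2 + 2 * inner (z - y) (scaled_grad y)"
    by (simp add: weight_sum_def scaled_grad_def sum.distrib sum_distrib_left sum_distrib_right inner_sum_right)
  also have "\<dots> = weight_sum y * ((norm (z - step y))\<^sup>2 - (norm (y - step y))\<^sup>2)"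
    by (simp add: scaled_grad_eq power2_norm_eq_inner inner_commute algebra_simps)
  finally show ?thesis .
qed

text \<open>Concavity of s \<mapsto> s^(p/2) bounds each summand by its tangent at the current point.\<close>
lemma Phi_majorized:
  assumes "0 \<le> p" "p \<le> 2"
  shows "Phi n a w eps p z
    \<le> Phi n a w eps p y + p/2 * weight_sum y * ((norm (z - step y))\<^sup>2 - (norm (y - step y))\<^sup>2)"
proof -
  have "w j * ((norm (z - a j))\<^sup>2 + eps) powr (p/2) \<le> w j * ((norm (y - a j))\<^sup>2 + eps) powr (p/2)
      + p/2 * (mu a w eps p y j * ((norm (z - a j))\<^sup>2 - (norm (y - a j))\<^sup>2))" if "j < n" for j
  proof -
    have "((norm (z - a j))\<^sup>2 + eps) powr (p/2) \<le> ((norm (y - a j))\<^sup>2 + eps) powr (p/2)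
        + p/2 * ((norm (y - a j))\<^sup>2 + eps) powr (p/2 - 1) * ((norm (z - a j))\<^sup>2 - (norm (y - a j))\<^sup>2)"
      using powr_le_tangent[OF norm_sq_add_eps_pos norm_sq_add_eps_pos, of "p/2" "z - a j" "y - a j"] assms by simp
    from mult_left_mono[OF this, of "w j"] w_pos[OF that] show ?thesis
      by (simp add: mu_def distrib_left mult_ac)
  qed
  then have "Phi n a w eps p z \<le> (\<Sum>j<n. w j * ((norm (y - a j))\<^sup>2 + eps) powr (p/2)
      + p/2 * (mu a w eps p y j * ((norm (z - a j))\<^sup>2 - (norm (y - a j))\<^sup>2)))"
    unfolding Phi_def by (intro sum_mono) auto
  also have "\<dots> = Phi n a w eps p y
      + p/2 * (\<Sum>j<n. mu a w eps p y j * ((norm (z - a j))\<^sup>2 - (norm (y - a j))\<^sup>2))"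
    by (simp only: Phi_def sum.distrib sum_distrib_left)
  finally show ?thesis
    by (simp add: weighted_sq_dist_change mult.assoc)
qed

lemma Phi_step_decrease:
  assumes "0 \<le> p" "p \<le> 2"
  shows "Phi n a w eps p (step y) + p/2 * weight_sum y * (norm (step y - y))\<^sup>2 \<le> Phi n a w eps p y"
  using Phi_majorized[OF assms, of "step y" y] by (simp add: norm_minus_commute)

lemma norm_step_le: "norm (step y) \<le> (\<Sum>j<n. norm (a j))"
proof -
  define R where "R = (\<Sum>j<n. norm (a j))"
  have "norm (\<Sum>j<n. mu a w eps p y j *\<^sub>R a j) \<le> (\<Sum>j<n. norm (mu a w eps p y j *\<^sub>R a j))"
    by (rule norm_sum)
  also have "\<dots> \<le> (\<Sum>j<n. mu a w eps p y j * R)"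
    unfolding R_def using mu_pos
    by (intro sum_mono) (auto intro!: mult_left_mono member_le_sum simp: less_imp_le)
  also have "\<dots> = weight_sum y * R"
    by (simp add: weight_sum_def sum_distrib_right)
  finally show ?thesis
    using weight_sum_pos[of y] by (simp add: step_def R_def field_simps)
qed

lemma weight_sum_lower_bound:
  assumes "p \<le> 2" and "norm y \<le> K"
  shows "w 0 * ((K + (\<Sum>j<n. norm (a j)))\<^sup>2 + eps) powr (p/2 - 1) \<le> weight_sum y"
proof -
  have "norm (a 0) \<le> (\<Sum>j<n. norm (a j))"
    using n_pos by (intro member_le_sum) auto
  then have "norm (y - a 0) \<le> K + (\<Sum>j<n. norm (a j))"
    using norm_triangle_ineq4[of y "a 0"] assms(2) by linarith
  then have "(norm (y - a 0))\<^sup>2 + eps \<le> (K + (\<Sum>j<n. norm (a j)))\<^sup>2 + eps"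
    by (simp add: power_mono)
  then have "((K + (\<Sum>j<n. norm (a j)))\<^sup>2 + eps) powr (p/2 - 1) \<le> ((norm (y - a 0))\<^sup>2 + eps) powr (p/2 - 1)"
    using assms(1) norm_sq_add_eps_pos by (intro powr_mono2') auto
  then have "w 0 * ((K + (\<Sum>j<n. norm (a j)))\<^sup>2 + eps) powr (p/2 - 1) \<le> mu a w eps p y 0"
    unfolding mu_def using w_pos[of 0] n_pos by (intro mult_left_mono) auto
  also have "\<dots> \<le> weight_sum y"
    unfolding weight_sum_def using mu_pos n_pos by (intro member_le_sum) (auto simp: less_imp_le)
  finally show ?thesis .
qed

lemma isCont_step: "isCont step y"
  using weight_sum_pos[of y]
  unfolding step_def[abs_def] weight_sum_def mu_def
  by (intro continuous_intros) (auto simp: norm_sq_add_eps_pos[THEN less_imp_neq, THEN not_sym])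
end

locale irls_sequence = irls +
  fixes x :: "nat \<Rightarrow> 'a"
  assumes iterate: "\<And>t. x (Suc t) = step (x t)"
begin

lemma norm_iterate_le: "norm (x t) \<le> max (norm (x 0)) (\<Sum>j<n. norm (a j))"
  using norm_step_le by (cases t) (auto simp: iterate le_max_iff_disj)

lemma bounded_iterates: "bounded (range x)"
  using norm_iterate_le by (auto simp: bounded_iff)

lemma iterate_steps_tendsto_zero:
  assumes "0 < p" "p \<le> 2"
  shows "(\<lambda>t. x (Suc t) - x t) \<longlonglongrightarrow> 0"
proof -
  define R where "R = (\<Sum>j<n. norm (a j))"
  define m where "m = w 0 * ((max (norm (x 0)) R + R)\<^sup>2 + eps) powr (p/2 - 1)"
  have "0 < (max (norm (x 0)) R + R)\<^sup>2 + eps"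
    using eps_pos by (simp add: add_nonneg_pos)
  then have "0 < m"
    using w_pos[of 0] n_pos by (simp add: m_def)
  have "m \<le> weight_sum (x t)" for t
    unfolding m_def R_def using assms(2) norm_iterate_le by (rule weight_sum_lower_bound)
  then have weight_le: "p/2 * m * (norm (x (Suc t) - x t))\<^sup>2 \<le> p/2 * weight_sum (x t) * (norm (x (Suc t) - x t))\<^sup>2" for t
    using assms(1) by (intro mult_right_mono mult_left_mono) auto
  have "Phi n a w eps p (x (Suc t)) + p/2 * m * (norm (x (Suc t) - x t))\<^sup>2 \<le> Phi n a w eps p (x t)" for t
    using weight_le[of t] Phi_step_decrease[OF less_imp_le[OF assms(1)] assms(2), of "x t"]
    unfolding iterate[symmetric] by linarith
  moreover have "0 \<le> Phi n a w eps p (x t)" for t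
    unfolding Phi_def using w_pos by (intro sum_nonneg mult_nonneg_nonneg) (auto intro: less_imp_le)
  ultimately show ?thesis
    using \<open>0 < m\<close> assms(1)
    by (intro sufficient_decrease_imp_steps_tendsto_zero[where f = "Phi n a w eps p" and c = "p/2 * m"]) auto
qed

lemma cluster_point_scaled_grad_zero:
  assumes "0 < p" "p \<le> 2" and "strict_mono r" "(x \<circ> r) \<longlonglongrightarrow> l"
  shows "scaled_grad l = 0"
  using cluster_point_of_orbit_is_fixed_point[OF iterate isCont_step
      iterate_steps_tendsto_zero[OF assms(1,2)] assms(3,4)]
  by (simp add: step_eq_iff)

end

theorem proposition4:
  fixes n :: nat and a :: "nat \<Rightarrow> 'a::euclidean_space" and w :: "nat \<Rightarrow> real"
    and eps p :: real and x :: "nat \<Rightarrow> 'a"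
  assumes "n \<ge> 1"
    and "\<And>j. j < n \<Longrightarrow> w j > 0"
    and "eps > 0"
    and "1 \<le> p" and "p \<le> 2"
    and "\<And>t. x (Suc t) = (1 / (\<Sum>j<n. mu a w eps p (x t) j)) *\<^sub>R (\<Sum>j<n. mu a w eps p (x t) j *\<^sub>R a j)"
  shows "(\<exists>!xs. stationary_point (Phi n a w eps p) xs)
    \<and> (\<forall>xs. stationary_point (Phi n a w eps p) xs \<longrightarrow>
          (\<forall>r l. strict_mono r \<and> (x \<circ> r) \<longlonglongrightarrow> l \<longrightarrow> l = xs)
          \<and> x \<longlonglongrightarrow> xs)"
proof -
  interpret irls n a w eps p
    using assms by unfold_locales auto
  interpret irls_sequence n a w eps p x
    using assms(6) by unfold_locales (simp add: step_def weight_sum_def)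
  have "0 < p"
    using assms(4) by simp
  note stationary = stationary_point_iff[OF \<open>0 < p\<close>]
  have cluster: "stationary_point (Phi n a w eps p) l" if "strict_mono r" "(x \<circ> r) \<longlonglongrightarrow> l" for r l
    using cluster_point_scaled_grad_zero[OF \<open>0 < p\<close> assms(5) that] stationary by simp
  have unique: "y = z" if "stationary_point (Phi n a w eps p) y" "stationary_point (Phi n a w eps p) z" for y z
    using scaled_grad_zero_unique[OF assms(4)] that stationary by blast
  obtain l r where "strict_mono r" "(x \<circ> r) \<longlonglongrightarrow> l"
    using bounded_imp_convergent_subsequence[OF bounded_iterates] by blast
  then have "stationary_point (Phi n a w eps p) l"
    by (rule cluster)
  then have all_cluster_points: "l' = l" if "strict_mono r'" "(x \<circ> r') \<longlonglongrightarrow> l'" for r' l'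
    using cluster[OF that] unique by blast
  then have "x \<longlonglongrightarrow> l"
    by (rule bounded_unique_cluster_point_imp_tendsto[OF bounded_iterates])
  with \<open>stationary_point (Phi n a w eps p) l\<close> show ?thesis
    using unique all_cluster_points by auto
qed

end
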